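(* Let $G$ be a finite abelian group with $|G|\ge4$, $\sigma$ an automorphism of $G$ of order two, and $S$ a symmetric subset of $G$ of size $d$. Let $X$ be one of the Cayley sum graph $C_\Sigma(G,S)$, the twisted Cayley graph $C(G,S)^\sigma$, or the twisted Cayley sum graph $C_\Sigma(G,S)^\sigma$, and suppose $X$ is undirected. Then the diameter of $X$ is at least $\frac{|S|}{4e}|G|^{1/|S|}-\frac12|S|$.
   Context: $C_\Sigma(G,S)$ has vertex set $G$ and an edge from $x$ to $x^{-1}s$ for each $s\in S$; $C(G,S)^\sigma$ has an edge from $x$ to $\sigma(xs)$; $C_\Sigma(G,S)^\sigma$ has an edge from $x$ to $\sigma(x^{-1}s)$. A graph is undirected if its adjacency matrix is symmetric. The diameter is the supremum over pairs of vertices of the length of a shortest path between them (infinite if the graph is disconnected). *)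

theory Defs
  imports Complex_Main "HOL-Library.Extended_Real" "HOL-Library.Cardinality"
begin

text \<open>The finite abelian group G is a finite type of class ab_group_add (written additively),
 so x^{-1} s becomes (- x + s).\<close>

datatype graph_kind = CayleySum | TwistedCayley | TwistedCayleySum

fun nbr :: "graph_kind \<Rightarrow> ('a::ab_group_add \<Rightarrow> 'a) \<Rightarrow> 'a \<Rightarrow> 'a \<Rightarrow> 'a" where
  "nbr CayleySum \<sigma> x s = - x + s"
| "nbr TwistedCayley \<sigma> x s = \<sigma> (x + s)"
| "nbr TwistedCayleySum \<sigma> x s = \<sigma> (- x + s)"

definition adj :: "graph_kind \<Rightarrow> ('a::ab_group_add \<Rightarrow> 'a) \<Rightarrow> 'a set \<Rightarrow> 'a \<Rightarrow> 'a \<Rightarrow> nat" where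
  "adj k \<sigma> S x y = card {s \<in> S. nbr k \<sigma> x s = y}"

definition undirected :: "graph_kind \<Rightarrow> ('a::ab_group_add \<Rightarrow> 'a) \<Rightarrow> 'a set \<Rightarrow> bool" where
  "undirected k \<sigma> S \<longleftrightarrow> (\<forall>x y. adj k \<sigma> S x y = adj k \<sigma> S y x)"

definition edges :: "graph_kind \<Rightarrow> ('a::ab_group_add \<Rightarrow> 'a) \<Rightarrow> 'a set \<Rightarrow> ('a \<times> 'a) set" where
  "edges k \<sigma> S = {(x, y). \<exists>s\<in>S. y = nbr k \<sigma> x s}"

definition graph_dist :: "('a \<times> 'a) set \<Rightarrow> 'a \<Rightarrow> 'a \<Rightarrow> enat" where
  "graph_dist E x y = Inf {enat n | n. (x, y) \<in> E ^^ n}"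

definition diameter :: "('a \<times> 'a) set \<Rightarrow> enat" where
  "diameter E = (SUP x. SUP y. graph_dist E x y)"

definition group_automorphism :: "('a::ab_group_add \<Rightarrow> 'a) \<Rightarrow> bool" where
  "group_automorphism \<sigma> \<longleftrightarrow> bij \<sigma> \<and> (\<forall>x y. \<sigma> (x + y) = \<sigma> x + \<sigma> y)"

end

theory Submission
  imports Defs "HOL-Library.Multiset"
begin

text \<open>
  In each of the three graphs the neighbour of x along s is \<tau> x + s', where \<tau> is one of the
  additive maps -id, \<sigma>, -\<sigma> and s' \<in> S (undirectedness forces \<sigma> S \<subseteq> S). Hence a walk of
  length n from 0 ends at the sum of a multiset of n elements of S, and a graph of diameter D
  has at most as many vertices as there are multisets of size at most D over S, namely
  C(D + d, d) \<le> (e (D + d) / d)^d with d = |S|. Taking d-th roots gives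
  d/e |G|^(1/d) \<le> D + d, which is stronger than the claim.
\<close>

lemma power_div_fact_le_exp:
  fixes x :: real
  assumes "x \<ge> 0"
  shows "x ^ n / fact n \<le> exp x"
proof -
  have exp: "(\<lambda>i. x ^ i /\<^sub>R fact i) sums exp x" by (rule exp_converges)
  have "(\<Sum>i\<in>{n}. x ^ i /\<^sub>R fact i) \<le> (\<Sum>i. x ^ i /\<^sub>R fact i)"
    by (rule sum_le_suminf) (use exp assms in \<open>auto simp: sums_iff\<close>)
  then show ?thesis using exp by (simp add: sums_iff divide_inverse mult.commute)
qed

lemma power_div_exp_le_fact: "(real n / exp 1) ^ n \<le> fact n"
proof -
  have "real n ^ n / fact n \<le> exp (real n)" by (rule power_div_fact_le_exp) simp
  also have "exp (real n) = exp 1 ^ n" by (simp flip: exp_of_nat_mult)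
  finally show ?thesis by (simp add: power_divide field_simps)
qed

lemma binomial_le_exp_power:
  assumes "d > 0"
  shows "real (n choose d) \<le> (exp 1 * real n / real d) ^ d"
proof -
  have "real (n choose d) * (real d / exp 1) ^ d \<le> real (n choose d) * fact d"
    by (intro mult_left_mono power_div_exp_le_fact) simp
  also have "\<dots> \<le> real n ^ d"
    by (metis binomial_fact_pow of_nat_fact of_nat_le_iff of_nat_mult of_nat_power)
  finally show ?thesis
    using assms by (simp add: power_mult_distrib field_simps)
qed

lemma root_bound_of_le_binomial:
  assumes "N \<le> n choose d"
  shows "real d / exp 1 * real N powr (1 / real d) \<le> real n"
proof (cases "d = 0")
  case False
  have "real N powr (1 / real d) \<le> ((exp 1 * real n / real d) ^ d) powr (1 / real d)"
  proof (rule powr_mono2)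
    show "real N \<le> (exp 1 * real n / real d) ^ d"
      using assms binomial_le_exp_power[of d n] False by (simp add: order_trans)
  qed simp_all
  also have "\<dots> = exp 1 * real n / real d"
    using False by (simp flip: powr_realpow' add: powr_powr)
  finally show ?thesis
    using False by (simp add: field_simps)
qed simp

lemma card_multisets_of_size_atMost:
  assumes "finite A"
  shows "card (\<Union>n\<le>D. multisets_of_size A n) = (D + card A) choose card A"
proof -
  have "card (\<Union>n\<le>D. multisets_of_size A n) = (\<Sum>n\<le>D. card (multisets_of_size A n))"
    using assms by (intro card_UN_disjoint) (auto dest: multisets_of_size_size)
  also have "\<dots> = (\<Sum>n\<le>D. (card A + n - 1) choose n)"
    using assms by (simp add: card_multisets_of_size)
  also have "\<dots> = (D + card A) choose card A"
  proof (cases "card A")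
    case 0
    then show ?thesis by (simp add: sum.atMost_shift binomial_eq_0)
  next
    case (Suc m)
    have "(\<Sum>n\<le>D. (card A + n - 1) choose n) = (\<Sum>n\<le>D. (m + n) choose n)" using Suc by simp
    also have "\<dots> = Suc (m + D) choose D" by (rule sum_choose_lower)
    also have "\<dots> = (D + card A) choose card A"
      using Suc binomial_symmetric[of D "D + card A"] by (simp add: add.commute)
    finally show ?thesis .
  qed
  finally show ?thesis .
qed

lemma sum_mset_image_additive:
  assumes "additive f"
  shows "sum_mset (image_mset f M) = f (sum_mset M)"
  by (induction M) (simp_all add: additive.add[OF assms] additive.zero[OF assms])

lemma relpow_from_zero_in_sums:
  fixes E :: "('a::ab_group_add \<times> 'a) set"
  assumes "additive \<tau>" and "\<tau> ` S \<subseteq> S"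
    and step: "\<And>x y. (x, y) \<in> E \<Longrightarrow> \<exists>s\<in>S. y = \<tau> x + s"
  shows "(0, y) \<in> E ^^ n \<Longrightarrow> y \<in> sum_mset ` multisets_of_size S n"
proof (induction n arbitrary: y)
  case 0
  then show ?case by simp
next
  case (Suc n)
  then obtain z where "(0, z) \<in> E ^^ n" and "(z, y) \<in> E" by auto
  then obtain M s where M: "M \<in> multisets_of_size S n" "z = sum_mset M"
    and s: "s \<in> S" "y = \<tau> z + s"
    using Suc.IH step by blast
  have "y = sum_mset (add_mset s (image_mset \<tau> M))"
    using M s sum_mset_image_additive[OF \<open>additive \<tau>\<close>] by (simp add: add.commute)
  moreover have "add_mset s (image_mset \<tau> M) \<in> multisets_of_size S (Suc n)"
    using M s \<open>\<tau> ` S \<subseteq> S\<close> by (auto simp: multisets_of_size_def)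
  ultimately show ?case by blast
qed

lemma relpow_of_diameter_le:
  assumes "diameter E \<le> enat D"
  shows "\<exists>n\<le>D. (x, y) \<in> E ^^ n"
proof -
  define lengths where "lengths = {enat n | n. (x, y) \<in> E ^^ n}"
  have "Inf lengths \<le> enat D"
    using assms unfolding diameter_def graph_dist_def lengths_def
    by (meson SUP_upper UNIV_I order_trans)
  then have "lengths \<noteq> {}"
    by (auto simp: top_enat_def)
  then have "Inf lengths \<in> lengths"
    unfolding Inf_enat_def by (auto intro: LeastI)
  with \<open>Inf lengths \<le> enat D\<close> show ?thesis
    unfolding lengths_def by auto
qed

lemma card_le_binomial_of_diameter:
  fixes E :: "('a::{ab_group_add, finite} \<times> 'a) set"
  assumes "additive \<tau>" and "\<tau> ` S \<subseteq> S"
    and "\<And>x y. (x, y) \<in> E \<Longrightarrow> \<exists>s\<in>S. y = \<tau> x + s"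
    and "diameter E = enat D"
  shows "CARD('a) \<le> (D + card S) choose card S"
proof -
  have "UNIV \<subseteq> sum_mset ` (\<Union>n\<le>D. multisets_of_size S n)"
  proof
    fix y :: 'a
    obtain n where "n \<le> D" and "(0, y) \<in> E ^^ n"
      using relpow_of_diameter_le[of E D 0 y] assms(4) by auto
    then have "y \<in> sum_mset ` multisets_of_size S n"
      using relpow_from_zero_in_sums[OF assms(1-3)] by simp
    with \<open>n \<le> D\<close> show "y \<in> sum_mset ` (\<Union>n\<le>D. multisets_of_size S n)"
      by blast
  qed
  then have "CARD('a) \<le> card (sum_mset ` (\<Union>n\<le>D. multisets_of_size S n))"
    by (simp add: top.extremum_unique)
  also have "\<dots> \<le> card (\<Union>n\<le>D. multisets_of_size S n)"
    by (intro card_image_le finite_UN_I finite_multisets_of_size) auto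
  also have "\<dots> = (D + card S) choose card S"
    by (simp add: card_multisets_of_size_atMost)
  finally show ?thesis .
qed

definition twist :: "graph_kind \<Rightarrow> ('a::ab_group_add \<Rightarrow> 'a) \<Rightarrow> 'a \<Rightarrow> 'a" where
  "twist k \<sigma> = (case k of
     CayleySum \<Rightarrow> uminus | TwistedCayley \<Rightarrow> \<sigma> | TwistedCayleySum \<Rightarrow> (\<lambda>x. - \<sigma> x))"

definition twist_gen :: "graph_kind \<Rightarrow> ('a::ab_group_add \<Rightarrow> 'a) \<Rightarrow> 'a \<Rightarrow> 'a" where
  "twist_gen k \<sigma> = (case k of CayleySum \<Rightarrow> id | _ \<Rightarrow> \<sigma>)"

lemma nbr_eq_twist:
  assumes "additive \<sigma>"
  shows "nbr k \<sigma> x s = twist k \<sigma> x + twist_gen k \<sigma> s"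
  using additive.add[OF assms] additive.minus[OF assms] additive.diff[OF assms]
  by (cases k) (simp_all add: twist_def twist_gen_def)

lemma additive_twist:
  assumes "additive \<sigma>"
  shows "additive (twist k \<sigma>)"
  using additive.add[OF assms]
  by (cases k) (simp_all add: twist_def additive_def)

lemma image_subset_of_undirected_twisted:
  assumes "additive \<sigma>" and "inj \<sigma>" and "finite S" and "uminus ` S = S"
    and "undirected k \<sigma> S" and "k \<noteq> CayleySum"
  shows "\<sigma> ` S \<subseteq> S"
proof
  fix y assume "y \<in> \<sigma> ` S"
  then obtain s where "s \<in> S" and y: "y = \<sigma> s" by blast
  have "nbr k \<sigma> 0 s = y"
    using \<open>k \<noteq> CayleySum\<close> y by (cases k) simp_all
  then have "adj k \<sigma> S 0 y \<noteq> 0"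
    using \<open>s \<in> S\<close> \<open>finite S\<close> by (auto simp: adj_def)
  then have "adj k \<sigma> S y 0 \<noteq> 0"
    using \<open>undirected k \<sigma> S\<close> by (simp add: undirected_def)
  then have "{t \<in> S. nbr k \<sigma> y t = 0} \<noteq> {}"
    by (metis adj_def card.empty)
  then obtain t where "t \<in> S" and t: "nbr k \<sigma> y t = \<sigma> 0"
    using additive.zero[OF assms(1)] by auto
  show "y \<in> S"
  proof (cases k)
    case TwistedCayley
    with t have "y + t = 0"
      using \<open>inj \<sigma>\<close> by (simp add: inj_eq)
    then have "y = - t"
      by (simp add: eq_neg_iff_add_eq_0)
    with \<open>t \<in> S\<close> \<open>uminus ` S = S\<close> show ?thesis by blast
  next
    case TwistedCayleySum
    with t have "- y + t = 0"
      using \<open>inj \<sigma>\<close> by (simp add: inj_eq)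
    with \<open>t \<in> S\<close> show ?thesis
      by (simp add: neg_eq_iff_add_eq_0 add.commute)
  qed (use \<open>k \<noteq> CayleySum\<close> in simp)
qed

lemma twist_image_subset:
  assumes "additive \<sigma>" and "inj \<sigma>" and "finite S" and "uminus ` S = S"
    and "undirected k \<sigma> S"
  shows "twist k \<sigma> ` S \<subseteq> S" and "twist_gen k \<sigma> ` S \<subseteq> S"
  using image_subset_of_undirected_twisted[OF assms] \<open>uminus ` S = S\<close>
  by (cases k; force simp: twist_def twist_gen_def)+

lemma edge_eq_twist:
  assumes "additive \<sigma>" and "twist_gen k \<sigma> ` S \<subseteq> S" and "(x, y) \<in> edges k \<sigma> S"
  shows "\<exists>s\<in>S. y = twist k \<sigma> x + s"
  using assms by (auto simp: edges_def nbr_eq_twist)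

theorem theorem9p1:
  fixes \<sigma> :: "'a::{ab_group_add, finite} \<Rightarrow> 'a" and S :: "'a set" and k :: graph_kind
  assumes "CARD('a) \<ge> 4"
    and "group_automorphism \<sigma>" and "\<sigma> \<circ> \<sigma> = id" and "\<sigma> \<noteq> id"
    and "uminus ` S = S"
    and "undirected k \<sigma> S"
  shows "ereal (real (card S) / (4 * exp 1) * real CARD('a) powr (1 / real (card S))
                - real (card S) / 2)
         \<le> ereal_of_enat (diameter (edges k \<sigma> S))"
proof (cases "diameter (edges k \<sigma> S)")
  case (enat D)
  have "additive \<sigma>" and "inj \<sigma>"
    using assms(2) by (simp_all add: group_automorphism_def additive_def bij_is_inj)
  note S_closed = twist_image_subset[OF this finite assms(5,6)]
  have "CARD('a) \<le> (D + card S) choose card S"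
    using card_le_binomial_of_diameter[OF additive_twist S_closed(1) edge_eq_twist enat]
      \<open>additive \<sigma>\<close> S_closed(2) by blast
  then have "real (card S) / exp 1 * real CARD('a) powr (1 / real (card S)) \<le> real (D + card S)"
    by (rule root_bound_of_le_binomial)
  then have "real (card S) / (4 * exp 1) * real CARD('a) powr (1 / real (card S))
      \<le> real (D + card S) / 4"
    by simp
  also have "\<dots> \<le> real D + real (card S) / 2"
    by simp
  finally show ?thesis
    using enat by (simp add: diff_le_eq)
qed simp

end
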